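(* Let $\epsilon:B\to A$ be a local augmentation and let $\alpha$, $\beta$ be invertible matrices over $B$ of sizes $n\times n$ and $m\times m$ with $\epsilon(\alpha)$ and $\epsilon(\beta)$ identity matrices. Then $D(\alpha\oplus\beta)=D(\alpha)D(\beta)$ in $\epsilon^{-1}(1)/C_0$.
   Context: Rings are associative with $1$. A local augmentation is a ring homomorphism $\epsilon:B\to A$ with a ring homomorphism $j:A\to B$, $\epsilon j=\mathrm{id}_A$, such that every square matrix over $B$ whose image under $\epsilon$ is invertible is itself invertible. $C_0$ is the subgroup of units of $B$ generated by $\{(1+ab)(1+ba)^{-1}\mid a,b\in B,\ \epsilon(a)=0\}$; it is a normal subgroup of $\epsilon^{-1}(1)$ with abelian quotient. $\alpha\oplus\beta$ is the block diagonal matrix. For an invertible $n\times n$ matrix $\gamma$ over $B$ with $\epsilon(\gamma)$ the identity, $D(\gamma)\in\epsilon^{-1}(1)/C_0$ is defined recursively: if $n=1$, $D(\gamma)$ is the class of $\gamma$; if $n\ge2$, write $\gamma=\begin{pmatrix}\gamma_{11}&\gamma_{12}\\ \gamma_{21}&\gamma_{22}\end{pmatrix}$ with $\gamma_{11}$ of size $1\times1$ (invertible since $\epsilon(\gamma_{11})=1$) and set $D(\gamma)=\gamma_{11}D(\gamma_{22}-\gamma_{21}\gamma_{11}^{-1}\gamma_{12})$. *)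

theory Defs
  imports "Jordan_Normal_Form.Matrix"
begin

definition ring_hom_fun :: "('b::ring_1 \<Rightarrow> 'a::ring_1) \<Rightarrow> bool" where
  "ring_hom_fun f \<longleftrightarrow> (\<forall>x y. f (x + y) = f x + f y) \<and> (\<forall>x y. f (x * y) = f x * f y) \<and> f 1 = 1"

definition local_augmentation :: "('b::ring_1 \<Rightarrow> 'a::ring_1) \<Rightarrow> ('a \<Rightarrow> 'b) \<Rightarrow> bool" where
  "local_augmentation eps j \<longleftrightarrow> ring_hom_fun eps \<and> ring_hom_fun j \<and> (\<forall>a. eps (j a) = a) \<and>
     (\<forall>n (M :: 'b mat). M \<in> carrier_mat n n \<longrightarrow> invertible_mat (map_mat eps M) \<longrightarrow> invertible_mat M)"

definition uinv :: "'b::ring_1 \<Rightarrow> 'b" where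
  "uinv x = (SOME y. x * y = 1 \<and> y * x = 1)"

inductive_set C0 :: "('b::ring_1 \<Rightarrow> 'a::ring_1) \<Rightarrow> 'b set" for eps where
  gen: "eps a = 0 \<Longrightarrow> (1 + a * b) * uinv (1 + b * a) \<in> C0 eps"
| one: "1 \<in> C0 eps"
| mult: "x \<in> C0 eps \<Longrightarrow> y \<in> C0 eps \<Longrightarrow> x * y \<in> C0 eps"
| inv: "x \<in> C0 eps \<Longrightarrow> uinv x \<in> C0 eps"

text \<open>Elements of the quotient eps^{-1}(1)/C_0 are cosets x C_0; the group operation is
  the complex product of cosets.\<close>
definition coset_C0 :: "('b::ring_1 \<Rightarrow> 'a::ring_1) \<Rightarrow> 'b \<Rightarrow> 'b set" where
  "coset_C0 eps x = (\<lambda>c. x * c) ` C0 eps"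

definition quot_mult :: "'b::ring_1 set \<Rightarrow> 'b set \<Rightarrow> 'b set" where
  "quot_mult X Y = {x * y | x y. x \<in> X \<and> y \<in> Y}"

function D_rep :: "'b::ring_1 mat \<Rightarrow> 'b" where
  "D_rep g = (if dim_row g \<le> 1 then g $$ (0,0) else
     (case split_block g 1 1 of (g11, g12, g21, g22) \<Rightarrow>
        g11 $$ (0,0) * D_rep (g22 - g21 * mat 1 1 (\<lambda>_. uinv (g11 $$ (0,0))) * g12)))"
  by pat_completeness auto
termination
  by (relation "measure dim_row") (auto simp: split_block_def Let_def)

definition D :: "('b::ring_1 \<Rightarrow> 'a::ring_1) \<Rightarrow> 'b mat \<Rightarrow> 'b set" where
  "D eps g = coset_C0 eps (D_rep g)"

end

theory Submission
  imports Defs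
begin

text \<open>Eliminating the first row and column of \<open>\<alpha> \<oplus> \<beta>\<close> produces \<open>\<alpha>' \<oplus> \<beta>\<close>, where \<open>\<alpha>'\<close> is
  the Schur complement of the pivot of \<open>\<alpha>\<close>; so by induction on the size of \<open>\<alpha>\<close> the representative
  of \<open>D(\<alpha> \<oplus> \<beta>)\<close> is literally the product of the representatives of \<open>D(\<alpha>)\<close> and \<open>D(\<beta>)\<close>.
  It remains to see that \<open>x \<mapsto> x C\<^sub>0\<close> is multiplicative, i.e. that \<open>C\<^sub>0\<close> is normal in
  \<open>\<epsilon>\<^sup>-\<^sup>1(1)\<close>: every element of \<open>\<epsilon>\<^sup>-\<^sup>1(1)\<close> is a unit by locality, and the commutator
  \<open>x y x\<^sup>-\<^sup>1 y\<^sup>-\<^sup>1\<close> of two such units is the generator \<open>(1 + a y)(1 + y a)\<^sup>-\<^sup>1\<close>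
  with \<open>a = x - y\<^sup>-\<^sup>1\<close>.\<close>

declare D_rep.simps[simp del]

definition schur :: "'b::ring_1 mat \<Rightarrow> 'b mat" where
  "schur g = mat (dim_row g - 1) (dim_col g - 1)
     (\<lambda>(i,j). g $$ (i+1,j+1) - g $$ (i+1,0) * uinv (g $$ (0,0)) * g $$ (0,j+1))"

lemma schur_carrier: "g \<in> carrier_mat k k \<Longrightarrow> schur g \<in> carrier_mat (k - 1) (k - 1)"
  by (simp add: schur_def)

lemma D_rep_base: "dim_row g \<le> 1 \<Longrightarrow> D_rep g = g $$ (0,0)"
  by (subst D_rep.simps) simp

lemma D_rep_step:
  assumes g: "g \<in> carrier_mat k k" and "k \<ge> 2"
  shows "D_rep g = g $$ (0,0) * D_rep (schur g)"
proof -
  obtain g11 g12 g21 g22 where split: "split_block g 1 1 = (g11, g12, g21, g22)"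
    by (metis prod_cases4)
  have blocks: "g11 = mat 1 1 (\<lambda>ij. g $$ ij)"
    "g12 = mat 1 (k-1) (\<lambda>(i,j). g $$ (i,j+1))"
    "g21 = mat (k-1) 1 (\<lambda>(i,j). g $$ (i+1,j))"
    "g22 = mat (k-1) (k-1) (\<lambda>(i,j). g $$ (i+1,j+1))"
    using split g unfolding split_block_def Let_def by auto
  have "g22 - g21 * mat 1 1 (\<lambda>_. uinv (g11 $$ (0,0))) * g12 = schur g"
    by (rule eq_matI) (use g in \<open>auto simp: blocks schur_def scalar_prod_def\<close>)
  moreover have "D_rep g = g11 $$ (0,0) * D_rep (g22 - g21 * mat 1 1 (\<lambda>_. uinv (g11 $$ (0,0))) * g12)"
    by (subst D_rep.simps) (use assms split in \<open>simp del: One_nat_def\<close>)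
  ultimately show ?thesis by (simp add: blocks)
qed

lemma schur_four_block_diag_1:
  assumes "\<alpha> \<in> carrier_mat 1 1" "\<beta> \<in> carrier_mat m m"
  shows "schur (four_block_mat \<alpha> (0\<^sub>m 1 m) (0\<^sub>m m 1) \<beta>) = \<beta>"
  by (rule eq_matI) (use assms in \<open>auto simp: schur_def\<close>)

lemma schur_four_block_diag:
  assumes "\<alpha> \<in> carrier_mat n n" "\<beta> \<in> carrier_mat m m" "n \<ge> 2"
  shows "schur (four_block_mat \<alpha> (0\<^sub>m n m) (0\<^sub>m m n) \<beta>) =
         four_block_mat (schur \<alpha>) (0\<^sub>m (n-1) m) (0\<^sub>m m (n-1)) \<beta>"
  by (rule eq_matI) (use assms in \<open>auto simp: schur_def\<close>)

lemma D_rep_four_block_diag: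
  assumes "\<alpha> \<in> carrier_mat n n" "\<beta> \<in> carrier_mat m m" "n \<ge> 1" "m \<ge> 1"
  shows "D_rep (four_block_mat \<alpha> (0\<^sub>m n m) (0\<^sub>m m n) \<beta>) = D_rep \<alpha> * D_rep \<beta>"
  using assms(3,1)
proof (induction n arbitrary: \<alpha> rule: nat_induct_at_least)
  case base
  let ?\<gamma> = "four_block_mat \<alpha> (0\<^sub>m 1 m) (0\<^sub>m m 1) \<beta>"
  have "?\<gamma> \<in> carrier_mat (1 + m) (1 + m)" using base assms by auto
  then have "D_rep ?\<gamma> = ?\<gamma> $$ (0,0) * D_rep (schur ?\<gamma>)"
    by (rule D_rep_step) (use assms in simp)
  also have "\<dots> = \<alpha> $$ (0,0) * D_rep \<beta>"
    using schur_four_block_diag_1[OF base assms(2)] base by simp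
  finally show ?case using D_rep_base[of \<alpha>] base by (simp add: carrier_matD)
next
  case (Suc k)
  let ?\<gamma> = "four_block_mat \<alpha> (0\<^sub>m (Suc k) m) (0\<^sub>m m (Suc k)) \<beta>"
  have "?\<gamma> \<in> carrier_mat (Suc k + m) (Suc k + m)" using Suc assms by auto
  then have "D_rep ?\<gamma> = ?\<gamma> $$ (0,0) * D_rep (schur ?\<gamma>)"
    by (rule D_rep_step) (use Suc in simp)
  also have "\<dots> = \<alpha> $$ (0,0) * D_rep (four_block_mat (schur \<alpha>) (0\<^sub>m k m) (0\<^sub>m m k) \<beta>)"
    using schur_four_block_diag[OF Suc.prems assms(2)] Suc by simp
  also have "\<dots> = \<alpha> $$ (0,0) * (D_rep (schur \<alpha>) * D_rep \<beta>)"
    using Suc.IH schur_carrier[OF Suc.prems] by simp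
  also have "\<dots> = D_rep \<alpha> * D_rep \<beta>"
    using D_rep_step[OF Suc.prems] Suc.hyps by (simp add: mult.assoc)
  finally show ?case .
qed

lemma uinv_eq:
  assumes "(x::'b::ring_1) * y = 1" "y * x = 1"
  shows "uinv x = y"
proof -
  have inv: "x * uinv x = 1 \<and> uinv x * x = 1"
    unfolding uinv_def by (rule someI[of _ y]) (use assms in simp)
  then have "uinv x = (y * x) * uinv x" using assms by simp
  also have "\<dots> = y" using inv by (simp add: mult.assoc)
  finally show ?thesis .
qed

lemma invertible_mat_1x1_unit:
  assumes "invertible_mat (mat 1 1 (\<lambda>_. x))"
  shows "\<exists>y. x * y = 1 \<and> y * x = 1"
proof -
  obtain B where B: "mat 1 1 (\<lambda>_. x) * B = 1\<^sub>m 1" "B * mat 1 1 (\<lambda>_. x) = 1\<^sub>m (dim_row B)"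
    using assms unfolding invertible_mat_def inverts_mat_def by auto
  have dims: "dim_col B = 1" "dim_row B = 1"
    using arg_cong[OF B(1), of dim_col] arg_cong[OF B(2), of dim_col] by simp_all
  have "x * B $$ (0,0) = 1" "B $$ (0,0) * x = 1"
    using arg_cong[OF B(1), of "\<lambda>M. M $$ (0,0)"] arg_cong[OF B(2), of "\<lambda>M. M $$ (0,0)"] dims
    by (simp_all add: scalar_prod_def)
  then show ?thesis by blast
qed

context
  fixes eps :: "'b::ring_1 \<Rightarrow> 'a::ring_1"
  assumes hom: "ring_hom_fun eps"
begin

lemma ring_hom_fun_add: "eps (x + y) = eps x + eps y"
  and ring_hom_fun_mult: "eps (x * y) = eps x * eps y"
  and ring_hom_fun_one: "eps 1 = 1"
  using hom unfolding ring_hom_fun_def by blast+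

lemma ring_hom_fun_zero: "eps 0 = 0"
  using ring_hom_fun_add[of 0 0] by simp

lemma ring_hom_fun_diff: "eps (x - y) = eps x - eps y"
  using ring_hom_fun_add[of "x - y" y] by (simp add: algebra_simps)

lemma map_mat_eq_one_entry:
  assumes "g \<in> carrier_mat k k" "map_mat eps g = 1\<^sub>m k" "i < k" "j < k"
  shows "eps (g $$ (i,j)) = (if i = j then 1 else 0)"
proof -
  have "eps (g $$ (i,j)) = map_mat eps g $$ (i,j)" using assms(1,3,4) by auto
  then show ?thesis using assms(2-4) by simp
qed

lemma map_mat_schur_eq_one:
  assumes g: "g \<in> carrier_mat k k" and "map_mat eps g = 1\<^sub>m k"
  shows "map_mat eps (schur g) = 1\<^sub>m (k - 1)"
proof (rule eq_matI)
  fix i j assume "i < dim_row (1\<^sub>m (k - 1) :: 'a mat)" "j < dim_col (1\<^sub>m (k - 1) :: 'a mat)"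
  then show "map_mat eps (schur g) $$ (i, j) = 1\<^sub>m (k - 1) $$ (i, j)"
    using g map_mat_eq_one_entry[OF assms, of "i+1" "j+1"] map_mat_eq_one_entry[OF assms, of "i+1" 0]
    by (simp add: schur_def ring_hom_fun_diff ring_hom_fun_mult ring_hom_fun_zero)
qed (use g in \<open>simp_all add: schur_def\<close>)

lemma eps_D_rep:
  assumes "k \<ge> 1" "g \<in> carrier_mat k k" "map_mat eps g = 1\<^sub>m k"
  shows "eps (D_rep g) = 1"
  using assms
proof (induction k arbitrary: g rule: nat_induct_at_least)
  case base
  then show ?case using D_rep_base[of g] map_mat_eq_one_entry[of g 1 0 0] by (simp add: carrier_matD)
next
  case (Suc k)
  have "eps (D_rep (schur g)) = 1"
    using Suc.IH schur_carrier[OF Suc.prems(1)] map_mat_schur_eq_one[OF Suc.prems] by simp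
  then show ?case
    using D_rep_step[OF Suc.prems(1)] Suc map_mat_eq_one_entry[of g "Suc k" 0 0]
    by (simp add: ring_hom_fun_mult)
qed

end

context
  fixes eps :: "'b::ring_1 \<Rightarrow> 'a::ring_1" and j :: "'a \<Rightarrow> 'b"
  assumes local_aug: "local_augmentation eps j"
begin

lemma local_augmentation_ring_hom: "ring_hom_fun eps"
  using local_aug unfolding local_augmentation_def by blast

lemmas eps_hom = ring_hom_fun_add[OF local_augmentation_ring_hom]
  ring_hom_fun_mult[OF local_augmentation_ring_hom] ring_hom_fun_one[OF local_augmentation_ring_hom]
  ring_hom_fun_diff[OF local_augmentation_ring_hom]

lemma eps_one_unit:
  assumes "eps x = 1"
  shows "\<exists>y. x * y = 1 \<and> y * x = 1"
proof -
  have "map_mat eps (mat 1 1 (\<lambda>_. x)) = 1\<^sub>m 1"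
    by (rule eq_matI) (simp_all add: assms)
  moreover have "invertible_mat (1\<^sub>m 1 :: 'a mat)"
    unfolding invertible_mat_def inverts_mat_def by (intro conjI exI[of _ "1\<^sub>m 1"]) simp_all
  ultimately have "invertible_mat (mat 1 1 (\<lambda>_. x))"
    using local_aug mat_carrier unfolding local_augmentation_def by metis
  then show ?thesis by (rule invertible_mat_1x1_unit)
qed

lemma eps_one_uinv:
  assumes "eps x = 1"
  shows "x * uinv x = 1" "uinv x * x = 1" "eps (uinv x) = 1"
proof -
  obtain y where "x * y = 1" "y * x = 1" using eps_one_unit[OF assms] by blast
  then show inv: "x * uinv x = 1" "uinv x * x = 1" using uinv_eq by auto
  show "eps (uinv x) = 1"
    using arg_cong[OF inv(1), of eps] assms by (simp add: eps_hom)
qed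

lemma C0_eps: "c \<in> C0 eps \<Longrightarrow> eps c = 1"
proof (induction rule: C0.induct)
  case (gen a b)
  then have "eps (uinv (1 + b * a)) = 1" by (simp add: eps_one_uinv eps_hom)
  then show ?case using gen by (simp add: eps_hom)
qed (simp_all add: eps_hom eps_one_uinv)

lemma commutator_in_C0:
  assumes x: "eps x = 1" and y: "eps y = 1"
  shows "x * y * uinv x * uinv y \<in> C0 eps"
proof -
  define a where "a = x - uinv y"
  note ux = eps_one_uinv[OF x] and uy = eps_one_uinv[OF y]
  have "eps a = 0" using x uy by (simp add: a_def eps_hom)
  then have "(1 + a * y) * uinv (1 + y * a) \<in> C0 eps" by (rule C0.gen)
  moreover have "1 + a * y = x * y" "1 + y * a = y * x"
    using uy by (simp_all add: a_def algebra_simps)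
  moreover have "uinv (y * x) = uinv x * uinv y"
    by (rule uinv_eq) (metis mult.assoc mult_1_left ux(1,2) uy(1,2))+
  ultimately show ?thesis by (simp add: mult.assoc)
qed

lemma conjugate_in_C0:
  assumes y: "eps y = 1" and c: "c \<in> C0 eps"
  shows "uinv y * c * y \<in> C0 eps"
proof -
  note uy = eps_one_uinv[OF y] and uc = eps_one_uinv[OF C0_eps[OF c]]
  have "uinv (uinv y) = y" using uinv_eq[OF uy(2,1)] .
  moreover have "uinv y * c * uinv (uinv y) * uinv c * c \<in> C0 eps"
    using C0.mult[OF commutator_in_C0[OF uy(3) C0_eps[OF c]] c] .
  ultimately show ?thesis using uc(2) by (simp add: mult.assoc)
qed

lemma coset_C0_mult:
  assumes y: "eps y = 1"
  shows "coset_C0 eps (x * y) = quot_mult (coset_C0 eps x) (coset_C0 eps y)"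
proof (intro equalityI subsetI)
  fix z assume "z \<in> coset_C0 eps (x * y)"
  then obtain c where c: "c \<in> C0 eps" "z = (x * 1) * (y * c)"
    unfolding coset_C0_def by (auto simp: mult.assoc)
  then show "z \<in> quot_mult (coset_C0 eps x) (coset_C0 eps y)"
    unfolding quot_mult_def coset_C0_def using C0.one by blast
next
  fix z assume "z \<in> quot_mult (coset_C0 eps x) (coset_C0 eps y)"
  then obtain c c' where c: "c \<in> C0 eps" "c' \<in> C0 eps" and z: "z = (x * c) * (y * c')"
    unfolding quot_mult_def coset_C0_def by auto
  have "z = x * (y * uinv y) * c * y * c'"
    using z eps_one_uinv(1)[OF y] by (simp add: mult.assoc)
  then have "z = x * y * ((uinv y * c * y) * c')"
    by (simp add: mult.assoc)
  moreover have "(uinv y * c * y) * c' \<in> C0 eps"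
    using C0.mult[OF conjugate_in_C0[OF y c(1)] c(2)] .
  ultimately show "z \<in> coset_C0 eps (x * y)" unfolding coset_C0_def by blast
qed

end

theorem lemma4p4:
  fixes eps :: "'b::ring_1 \<Rightarrow> 'a::ring_1" and j :: "'a \<Rightarrow> 'b"
    and \<alpha> \<beta> :: "'b mat" and n m :: nat
  assumes "local_augmentation eps j"
    and "\<alpha> \<in> carrier_mat n n" and "\<beta> \<in> carrier_mat m m"
    and "n \<ge> 1" and "m \<ge> 1"
    and "invertible_mat \<alpha>" and "invertible_mat \<beta>"
    and "map_mat eps \<alpha> = 1\<^sub>m n" and "map_mat eps \<beta> = 1\<^sub>m m"
  shows "D eps (four_block_mat \<alpha> (0\<^sub>m n m) (0\<^sub>m m n) \<beta>) = quot_mult (D eps \<alpha>) (D eps \<beta>)"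
proof -
  have "eps (D_rep \<beta>) = 1"
    using eps_D_rep[OF local_augmentation_ring_hom[OF assms(1)] assms(5,3,9)] .
  then show ?thesis
    unfolding D_def D_rep_four_block_diag[OF assms(2-5)] by (rule coset_C0_mult[OF assms(1)])
qed

end
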